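(* Let $\kappa$ be a regular uncountable cardinal with $\kappa^{<\kappa}=\kappa$ and $\gamma^\omega<\kappa$ for all $\gamma<\kappa$, and let $I^i$, $I^i_\alpha$ be as in the context. For every $i<\kappa$, every limit ordinal $\delta<\kappa$ and every $\nu\in I^i$ with $\nu\notin I^i_\delta$, there is $\beta<\delta$ such that for every $\sigma\in I^i_\delta$ with $\sigma>\nu$ there is $\sigma'\in I^0_\beta$ with $\sigma>\sigma'>\nu$.
   Context: $I^0$: order $\kappa\times\mathbb Q$ lexicographically; $I^0$ is the set of $f:\omega\to\kappa\times\mathbb Q$, $f(n)=(f_1(n),f_2(n))$, with $\{n\mid f_1(n)\ne0\}$ finite, ordered by comparing at the least $n$ where they differ. Construct linear orders $I^0\subseteq I^1\subseteq\dots$ ($i<\kappa$): given $I^i$, for each $\nu\in I^i$ add a new element $\nu^{i+1}$ with $\nu^{i+1}<\nu$ and, for every $\tau\in I^i\setminus\{\nu\}$, $\tau<\nu^{i+1}$ iff $\tau<\nu$ (for distinct $\nu,\mu$, $\nu^{i+1}<\mu^{i+1}$ iff $\nu<\mu$); $I^{i+1}=I^i\cup\{\nu^{i+1}\mid\nu\in I^i\}$; at limits take unions. Representations: $I^0_\alpha=\{\nu\in I^0\mid\nu_1(n)<\alpha\ \forall n\}$; $I^{i+1}_\alpha=I^i_\alpha\cup\{\nu^{i+1}\mid\nu\in I^i_\alpha\}$; for limit $i$, $I^i_\alpha=\bigcup_{j<i}I^j_\alpha$. *)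

theory Defs
  imports Complex_Main
begin

text \<open>The cardinal kappa is represented by a cardinal order k on a type 'k
(card_order: a well-order on all of 'k which is minimal among well-orders of
the same cardinality); the elements of 'k are thus the ordinals below kappa.\<close>

definition kless :: "'k rel \<Rightarrow> 'k \<Rightarrow> 'k \<Rightarrow> bool" where
  "kless k a b \<longleftrightarrow> (a, b) \<in> k \<and> a \<noteq> b"

definition kzero :: "'k rel \<Rightarrow> 'k" where
  "kzero k = (THE z. \<forall>x. (z, x) \<in> k)"

definition ksucc_of :: "'k rel \<Rightarrow> 'k \<Rightarrow> 'k \<Rightarrow> bool" where
  "ksucc_of k j i \<longleftrightarrow> kless k j i \<and> (\<forall>x. kless k j x \<longrightarrow> (i, x) \<in> k)"

definition klimit :: "'k rel \<Rightarrow> 'k \<Rightarrow> bool" where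
  "klimit k d \<longleftrightarrow> d \<noteq> kzero k \<and> \<not> (\<exists>j. ksucc_of k j d)"

definition I0 :: "'k rel \<Rightarrow> (nat \<Rightarrow> 'k \<times> rat) set" where
  "I0 k = {f. finite {n. fst (f n) \<noteq> kzero k}}"

definition lexKQ :: "'k rel \<Rightarrow> 'k \<times> rat \<Rightarrow> 'k \<times> rat \<Rightarrow> bool" where
  "lexKQ k p q \<longleftrightarrow> kless k (fst p) (fst q) \<or> (fst p = fst q \<and> snd p < snd q)"

definition lessI0 :: "'k rel \<Rightarrow> (nat \<Rightarrow> 'k \<times> rat) \<Rightarrow> (nat \<Rightarrow> 'k \<times> rat) \<Rightarrow> bool" where
  "lessI0 k f g \<longleftrightarrow> (\<exists>n. (\<forall>m<n. f m = g m) \<and> lexKQ k (f n) (g n))"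

definition I0_rep :: "'k rel \<Rightarrow> 'k \<Rightarrow> (nat \<Rightarrow> 'k \<times> rat) set" where
  "I0_rep k \<alpha> = {f \<in> I0 k. \<forall>n. kless k (fst (f n)) \<alpha>}"

text \<open>Ambient carrier of all I^i. An element of I^0 is encoded as (f, []).
The new element nu^(j+1) added at the successor stage j+1 is the formal
symbol (fst nu, snd nu @ [j]); it is new, i.e. not in I^j, and distinct nu
give distinct nu^(j+1).\<close>
type_synonym 'k elt = "(nat \<Rightarrow> 'k \<times> rat) \<times> 'k list"

definition hat :: "'k \<Rightarrow> 'k elt \<Rightarrow> 'k elt" where
  "hat j \<nu> = (fst \<nu>, snd \<nu> @ [j])"

text \<open>One step of the transfinite recursion. A stage is the triple
(I^i, strict order on I^i, alpha \<mapsto> I^i_alpha).\<close>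
definition stage_step ::
  "'k rel \<Rightarrow> ('k \<Rightarrow> 'k elt set \<times> 'k elt rel \<times> ('k \<Rightarrow> 'k elt set)) \<Rightarrow> 'k
     \<Rightarrow> 'k elt set \<times> 'k elt rel \<times> ('k \<Rightarrow> 'k elt set)" where
  "stage_step k g i =
    (if i = kzero k then
       ((\<lambda>f. (f, [])) ` I0 k,
        {((f, []), (f', [])) | f f'. f \<in> I0 k \<and> f' \<in> I0 k \<and> lessI0 k f f'},
        (\<lambda>\<alpha>. (\<lambda>f. (f, [])) ` I0_rep k \<alpha>))
     else if (\<exists>j. ksucc_of k j i) then
       (let j = (THE j. ksucc_of k j i); A = fst (g j); R = fst (snd (g j));
            Rep = snd (snd (g j)) in
        (A \<union> hat j ` A,
         R \<union> {(hat j \<nu>, \<nu>) | \<nu>. \<nu> \<in> A}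
           \<union> {(\<tau>, hat j \<nu>) | \<tau> \<nu>. \<nu> \<in> A \<and> \<tau> \<in> A \<and> \<tau> \<noteq> \<nu> \<and> (\<tau>, \<nu>) \<in> R}
           \<union> {(hat j \<nu>, \<tau>) | \<tau> \<nu>. \<nu> \<in> A \<and> \<tau> \<in> A \<and> \<tau> \<noteq> \<nu> \<and> (\<nu>, \<tau>) \<in> R}
           \<union> {(hat j \<nu>, hat j \<mu>) | \<nu> \<mu>. \<nu> \<in> A \<and> \<mu> \<in> A \<and> \<nu> \<noteq> \<mu> \<and> (\<nu>, \<mu>) \<in> R},
         (\<lambda>\<alpha>. Rep \<alpha> \<union> hat j ` Rep \<alpha>)))
     else
       ((\<Union>j\<in>{j. kless k j i}. fst (g j)),
        (\<Union>j\<in>{j. kless k j i}. fst (snd (g j))),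
        (\<lambda>\<alpha>. \<Union>j\<in>{j. kless k j i}. snd (snd (g j)) \<alpha>)))"

definition stage :: "'k rel \<Rightarrow> 'k \<Rightarrow> 'k elt set \<times> 'k elt rel \<times> ('k \<Rightarrow> 'k elt set)" where
  "stage k = wfrec {(a, b). kless k a b} (stage_step k)"

definition Iset :: "'k rel \<Rightarrow> 'k \<Rightarrow> 'k elt set" where
  "Iset k i = fst (stage k i)"

text \<open>strict order of I^i: (x, y) \<in> Iless k i means x < y\<close>
definition Iless :: "'k rel \<Rightarrow> 'k \<Rightarrow> 'k elt rel" where
  "Iless k i = fst (snd (stage k i))"

definition Irep :: "'k rel \<Rightarrow> 'k \<Rightarrow> 'k \<Rightarrow> 'k elt set" where
  "Irep k i \<alpha> = snd (snd (stage k i)) \<alpha>"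

end

theory Submission
  imports Defs
begin

text \<open>
  Every element x of I^i lies over the base point fst x in I^0, since the new elements
  hat j nu keep the base of nu. By induction on i, the order of I^i compares elements with
  different bases as I^0 does, an element (f, []) of I^0 is compared with every x as f with
  fst x, and I^i_alpha consists of the elements whose base lies in I^0_alpha. So it suffices
  to interpolate in I^0: if the base g of nu is not in I^0_delta, let n be the least
  coordinate with g_1(n) >= delta. Every sigma in I^0_delta above g first differs from g
  before n, so an element of I^0_beta between them is obtained by truncating g there, as
  soon as beta < delta exceeds the finitely many g_1(m), m < n; such beta exists because
  delta is a limit.
\<close>

locale ordinal_index =
  fixes k :: "'k rel"
  assumes well_order: "well_order_on UNIV k"
begin

lemma kle_refl: "(x, x) \<in> k"
  using well_order
  unfolding well_order_on_def linear_order_on_def partial_order_on_def preorder_on_def refl_on_def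
  by blast

lemma kle_trans: "(x, y) \<in> k \<Longrightarrow> (y, z) \<in> k \<Longrightarrow> (x, z) \<in> k"
  using well_order
  unfolding well_order_on_def linear_order_on_def partial_order_on_def preorder_on_def trans_def
  by blast

lemma kle_antisym: "(x, y) \<in> k \<Longrightarrow> (y, x) \<in> k \<Longrightarrow> x = y"
  using well_order
  unfolding well_order_on_def linear_order_on_def partial_order_on_def antisym_def
  by blast

lemma kle_total: "(x, y) \<in> k \<or> (y, x) \<in> k"
proof -
  have "total_on UNIV k"
    using well_order unfolding well_order_on_def linear_order_on_def by blast
  then show ?thesis
    using kle_refl unfolding total_on_def by (cases "x = y") auto
qed

lemma not_kless_kle: "\<not> kless k x y \<Longrightarrow> (y, x) \<in> k"
  unfolding kless_def using kle_total kle_refl by blast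

lemma kle_not_kless: "(y, x) \<in> k \<Longrightarrow> \<not> kless k x y"
  unfolding kless_def using kle_antisym by blast

lemma kless_irrefl: "\<not> kless k x x"
  unfolding kless_def by simp

lemma kless_trans: "kless k x y \<Longrightarrow> kless k y z \<Longrightarrow> kless k x z"
  unfolding kless_def using kle_trans kle_antisym by blast

lemma kle_kless_trans: "(x, y) \<in> k \<Longrightarrow> kless k y z \<Longrightarrow> kless k x z"
  unfolding kless_def using kle_trans kle_antisym by blast

lemma wf_kless: "wf {(x, y). kless k x y}"
proof -
  have "{(x, y). kless k x y} = k - Id"
    unfolding kless_def by auto
  then show ?thesis
    using well_order unfolding well_order_on_def by simp
qed

lemma kzero_least: "(kzero k, x) \<in> k"
proof -
  obtain z where "\<And>y. (y, z) \<in> {(x, y). kless k x y} \<Longrightarrow> y \<notin> UNIV"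
    using wfE_min[OF wf_kless UNIV_I] by blast
  then have least: "\<forall>x. (z, x) \<in> k"
    using not_kless_kle by blast
  then have "kzero k = z"
    unfolding kzero_def using kle_antisym by blast
  then show ?thesis
    using least by simp
qed

lemma kzero_kless_limit: "klimit k \<delta> \<Longrightarrow> kless k (kzero k) \<delta>"
  unfolding klimit_def kless_def using kzero_least by blast

lemma ksucc_kless: "ksucc_of k j i \<Longrightarrow> kless k j i"
  unfolding ksucc_of_def by blast

lemma ksucc_unique: "ksucc_of k j i \<Longrightarrow> ksucc_of k j' i \<Longrightarrow> j = j'"
proof (rule ccontr)
  assume succ: "ksucc_of k j i" "ksucc_of k j' i" and "j \<noteq> j'"
  then have "kless k j j' \<or> kless k j' j"
    using not_kless_kle kle_antisym by blast
  then have "(i, j') \<in> k \<and> kless k j' i \<or> (i, j) \<in> k \<and> kless k j i"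
    using succ unfolding ksucc_of_def by blast
  then have "kless k i i"
    using kle_kless_trans by blast
  then show False
    using kless_irrefl by blast
qed

lemma ksucc_neq_kzero: "ksucc_of k j i \<Longrightarrow> i \<noteq> kzero k"
  using ksucc_kless kle_not_kless kzero_least by blast

lemma the_ksucc: "ksucc_of k j i \<Longrightarrow> (THE j. ksucc_of k j i) = j"
  using ksucc_unique by blast

lemma limit_dense:
  assumes "klimit k \<delta>" "kless k a \<delta>"
  shows "\<exists>b. kless k a b \<and> kless k b \<delta>"
proof -
  have "\<delta> \<in> {y. kless k a y}"
    using assms(2) by simp
  then obtain z where z: "kless k a z" and min: "\<And>y. kless k y z \<Longrightarrow> \<not> kless k a y"
    by (rule wfE_min[OF wf_kless]) auto
  have least: "(z, y) \<in> k" if "kless k a y" for y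
    using min that by (intro not_kless_kle) auto
  then have "ksucc_of k a z"
    unfolding ksucc_of_def using z by simp
  then have "z \<noteq> \<delta>"
    using assms(1) unfolding klimit_def by auto
  moreover have "(z, \<delta>) \<in> k"
    using least assms(2) by simp
  ultimately show ?thesis
    using z unfolding kless_def by auto
qed

lemma limit_bounds_finite:
  assumes "klimit k \<delta>" "finite F" "\<forall>x\<in>F. kless k x \<delta>"
  shows "\<exists>\<beta>. kless k \<beta> \<delta> \<and> (\<forall>x\<in>F. kless k x \<beta>)"
  using assms(2,3)
proof (induction F rule: finite_induct)
  case empty
  then show ?case
    using kzero_kless_limit[OF assms(1)] by blast
next
  case (insert x F)
  then obtain \<beta> where \<beta>: "kless k \<beta> \<delta>" "\<forall>y\<in>F. kless k y \<beta>"
    by auto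
  define m where "m = (if kless k x \<beta> then \<beta> else x)"
  have "kless k m \<delta>"
    using \<beta> insert.prems unfolding m_def by simp
  then obtain b where b: "kless k m b" "kless k b \<delta>"
    using limit_dense[OF assms(1)] by blast
  have "kless k x b \<and> kless k \<beta> b"
  proof (cases "kless k x \<beta>")
    case True
    then show ?thesis
      using b(1) kless_trans unfolding m_def by auto
  next
    case False
    then have "m = x" "(\<beta>, x) \<in> k"
      unfolding m_def using not_kless_kle by auto
    then show ?thesis
      using b(1) kle_kless_trans by auto
  qed
  then show ?case
    using b(2) \<beta>(2) kless_trans by blast
qed

lemma transfinite_induct[case_names zero succ limit]:
  assumes zero: "P (kzero k)"
    and succ: "\<And>j i. ksucc_of k j i \<Longrightarrow> P j \<Longrightarrow> P i"
    and limit: "\<And>i. klimit k i \<Longrightarrow> (\<And>j. kless k j i \<Longrightarrow> P j) \<Longrightarrow> P i"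
  shows "P i"
proof (induction i rule: wf_induct_rule[OF wf_kless])
  case (1 i)
  then have IH: "\<And>j. kless k j i \<Longrightarrow> P j"
    by blast
  consider "i = kzero k" | j where "ksucc_of k j i" | "klimit k i"
    unfolding klimit_def by blast
  then show ?case
  proof cases
    case 1
    then show ?thesis
      using zero by simp
  next
    case (2 j)
    then show ?thesis
      using succ IH ksucc_kless by blast
  next
    case 3
    then show ?thesis
      using limit IH by blast
  qed
qed

lemma stage_unfold: "stage k i = stage_step k (stage k) i"
proof -
  have "adm_wf {(x, y). kless k x y} (stage_step k)"
    unfolding adm_wf_def
  proof (intro allI impI)
    fix g g' :: "'k \<Rightarrow> 'k elt set \<times> 'k elt rel \<times> ('k \<Rightarrow> 'k elt set)" and i
    assume eq: "\<forall>j. (j, i) \<in> {(x, y). kless k x y} \<longrightarrow> g j = g' j"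
    then have below: "\<And>j. kless k j i \<Longrightarrow> g j = g' j"
      by simp
    have "g (THE j. ksucc_of k j i) = g' (THE j. ksucc_of k j i)" if succ: "\<exists>j. ksucc_of k j i"
    proof -
      obtain j where j: "ksucc_of k j i"
        using succ by blast
      then show ?thesis
        using below the_ksucc ksucc_kless by simp
    qed
    then show "stage_step k g i = stage_step k g' i"
      unfolding stage_step_def using below by (simp add: Let_def cong: SUP_cong_simp)
  qed
  then show ?thesis
    unfolding stage_def using wfrec_fixpoint[OF wf_kless] by metis
qed

lemma stage_zero:
  shows "Iset k (kzero k) = (\<lambda>f. (f, [])) ` I0 k"
    and "Iless k (kzero k) =
      {((f, []), (f', [])) | f f'. f \<in> I0 k \<and> f' \<in> I0 k \<and> lessI0 k f f'}"
    and "Irep k (kzero k) \<alpha> = (\<lambda>f. (f, [])) ` I0_rep k \<alpha>"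
  using stage_unfold[of "kzero k"] unfolding Iset_def Iless_def Irep_def stage_step_def
  by simp_all

lemma stage_succ:
  assumes "ksucc_of k j i"
  shows "Iset k i = Iset k j \<union> hat j ` Iset k j"
    and "Iless k i = Iless k j
      \<union> {(hat j \<nu>, \<nu>) | \<nu>. \<nu> \<in> Iset k j}
      \<union> {(\<tau>, hat j \<nu>) | \<tau> \<nu>. \<nu> \<in> Iset k j \<and>
         \<tau> \<in> Iset k j \<and> \<tau> \<noteq> \<nu> \<and> (\<tau>, \<nu>) \<in> Iless k j}
      \<union> {(hat j \<nu>, \<tau>) | \<tau> \<nu>. \<nu> \<in> Iset k j \<and>
         \<tau> \<in> Iset k j \<and> \<tau> \<noteq> \<nu> \<and> (\<nu>, \<tau>) \<in> Iless k j}
      \<union> {(hat j \<nu>, hat j \<mu>) | \<nu> \<mu>. \<nu> \<in> Iset k j \<and>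
         \<mu> \<in> Iset k j \<and> \<nu> \<noteq> \<mu> \<and> (\<nu>, \<mu>) \<in> Iless k j}"
    and "Irep k i \<alpha> = Irep k j \<alpha> \<union> hat j ` Irep k j \<alpha>"
  using stage_unfold[of i] ksucc_neq_kzero[OF assms] the_ksucc[OF assms] assms
  unfolding Iset_def Iless_def Irep_def stage_step_def
  by (auto simp: Let_def)

lemma stage_limit:
  assumes "klimit k i"
  shows "Iset k i = (\<Union>j\<in>{j. kless k j i}. Iset k j)"
    and "Iless k i = (\<Union>j\<in>{j. kless k j i}. Iless k j)"
    and "Irep k i \<alpha> = (\<Union>j\<in>{j. kless k j i}. Irep k j \<alpha>)"
  using stage_unfold[of i] assms
  unfolding Iset_def Iless_def Irep_def stage_step_def klimit_def
  by simp_all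

lemma lexKQ_irrefl: "\<not> lexKQ k p p"
  unfolding lexKQ_def using kless_irrefl by simp

lemma lessI0_irrefl: "\<not> lessI0 k f f"
  unfolding lessI0_def using lexKQ_irrefl by blast

lemma fst_hat [simp]: "fst (hat j \<nu>) = fst \<nu>"
  by (simp add: hat_def)

lemma Iset_fst_in_I0: "x \<in> Iset k i \<Longrightarrow> fst x \<in> I0 k"
proof (induction i arbitrary: x rule: transfinite_induct)
  case zero
  then show ?case
    by (auto simp: stage_zero)
next
  case (succ j i)
  then show ?case
    by (cases x) (auto simp: stage_succ hat_def)
next
  case (limit i)
  then show ?case
    by (cases x) (auto simp: stage_limit)
qed

lemma I0_in_Iset: "f \<in> I0 k \<Longrightarrow> (f, []) \<in> Iset k i"
proof (induction i rule: transfinite_induct)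
  case zero
  then show ?case
    by (simp add: stage_zero)
next
  case (succ j i)
  then show ?case
    by (simp add: stage_succ)
next
  case (limit i)
  then show ?case
    using kzero_kless_limit by (auto simp: stage_limit)
qed

lemma Irep_eq_fst_I0_rep: "Irep k i \<alpha> = {x \<in> Iset k i. fst x \<in> I0_rep k \<alpha>}"
proof (induction i rule: transfinite_induct)
  case zero
  then show ?case
    by (auto simp: stage_zero I0_rep_def)
next
  case (succ j i)
  then have "Irep k i \<alpha> = {x \<in> Iset k j. fst x \<in> I0_rep k \<alpha>}
      \<union> hat j ` {x \<in> Iset k j. fst x \<in> I0_rep k \<alpha>}"
    by (simp add: stage_succ)
  also have "\<dots> = {x \<in> Iset k j \<union> hat j ` Iset k j. fst x \<in> I0_rep k \<alpha>}"
    by force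
  finally show ?case
    using succ.hyps by (simp add: stage_succ)
next
  case (limit i)
  then show ?case
    by (simp add: stage_limit) blast
qed

lemma Iless_imp_lessI0_fst:
  "(x, y) \<in> Iless k i \<Longrightarrow> fst x \<noteq> fst y \<Longrightarrow> lessI0 k (fst x) (fst y)"
proof (induction i arbitrary: x y rule: transfinite_induct)
  case zero
  then show ?case
    by (auto simp: stage_zero)
next
  case (succ j i)
  then show ?case
    by (cases x, cases y) (auto simp: stage_succ hat_def)
next
  case (limit i)
  then show ?case
    by (cases x, cases y) (auto simp: stage_limit)
qed

lemma lessI0_fst_imp_Iless:
  assumes "x \<in> Iset k i" "f \<in> I0 k"
  shows "(lessI0 k f (fst x) \<longrightarrow> ((f, []), x) \<in> Iless k i)
    \<and> (lessI0 k (fst x) f \<longrightarrow> (x, (f, [])) \<in> Iless k i)"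
  using assms
proof (induction i arbitrary: x rule: transfinite_induct)
  case zero
  then show ?case
    by (auto simp: stage_zero)
next
  case (succ j i)
  from succ.prems(1) consider "x \<in> Iset k j" | \<nu> where "\<nu> \<in> Iset k j" "x = hat j \<nu>"
    by (auto simp: stage_succ[OF succ.hyps])
  then show ?case
  proof cases
    case 1
    then show ?thesis
      using succ by (simp add: stage_succ)
  next
    case (2 \<nu>)
    have f: "(f, []) \<in> Iset k j"
      using I0_in_Iset succ.prems(2) .
    have IH: "(lessI0 k f (fst \<nu>) \<longrightarrow> ((f, []), \<nu>) \<in> Iless k j)
      \<and> (lessI0 k (fst \<nu>) f \<longrightarrow> (\<nu>, (f, [])) \<in> Iless k j)"
      using succ.IH 2(1) succ.prems(2) by blast
    show ?thesis
    proof (intro conjI impI)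
      assume "lessI0 k f (fst x)"
      then have "((f, []), \<nu>) \<in> Iless k j" "(f, []) \<noteq> \<nu>"
        using IH 2(2) lessI0_irrefl by auto
      then show "((f, []), x) \<in> Iless k i"
        unfolding stage_succ(2)[OF succ.hyps] using 2 f by blast
    next
      assume "lessI0 k (fst x) f"
      then have "(\<nu>, (f, [])) \<in> Iless k j" "(f, []) \<noteq> \<nu>"
        using IH 2(2) lessI0_irrefl by auto
      then show "(x, (f, [])) \<in> Iless k i"
        unfolding stage_succ(2)[OF succ.hyps] using 2 f by blast
    qed
  qed
next
  case (limit i)
  then obtain j where "kless k j i" "x \<in> Iset k j"
    by (auto simp: stage_limit)
  then show ?case
    using limit.IH limit.prems(2) stage_limit(2)[OF limit.hyps] by blast
qed

lemma lexKQ_interpolate: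
  assumes "lexKQ k p q"
  shows "\<exists>c. fst c = fst p \<and> lexKQ k p c \<and> lexKQ k c q"
proof (cases "fst p = fst q")
  case True
  then have "snd p < snd q"
    using assms kless_irrefl unfolding lexKQ_def by auto
  then show ?thesis
    using True by (intro exI[of _ "(fst p, (snd p + snd q) / 2)"]) (auto simp: lexKQ_def)
next
  case False
  then have "kless k (fst p) (fst q)"
    using assms unfolding lexKQ_def by auto
  then show ?thesis
    by (intro exI[of _ "(fst p, snd p + 1)"]) (auto simp: lexKQ_def)
qed

lemma lessI0_interpolate_in_I0_rep:
  assumes agree: "\<forall>m<n. g m = f m" and lex: "lexKQ k (g n) (f n)"
    and below: "\<forall>m\<le>n. kless k (fst (g m)) \<beta>" and zero: "kless k (kzero k) \<beta>"
  shows "\<exists>h \<in> I0_rep k \<beta>. lessI0 k g h \<and> lessI0 k h f"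
proof -
  obtain c where c: "fst c = fst (g n)" "lexKQ k (g n) c" "lexKQ k c (f n)"
    using lexKQ_interpolate[OF lex] by blast
  define h where "h m = (if m < n then g m else if m = n then c else (kzero k, 0))" for m
  have "{m. fst (h m) \<noteq> kzero k} \<subseteq> {..n}"
    unfolding h_def by auto
  then have "h \<in> I0 k"
    unfolding I0_def using finite_subset by blast
  moreover have "kless k (fst (h m)) \<beta>" for m
    using below zero c(1) unfolding h_def by auto
  ultimately have "h \<in> I0_rep k \<beta>"
    unfolding I0_rep_def by blast
  moreover have "lessI0 k g h"
    unfolding lessI0_def h_def using c(2) by (intro exI[of _ n]) auto
  moreover have "lessI0 k h f"
    unfolding lessI0_def h_def using agree c(3) by (intro exI[of _ n]) auto
  ultimately show ?thesis
    by blast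
qed

lemma I0_rep_interpolation:
  assumes lim: "klimit k \<delta>" and g: "g \<in> I0 k" "g \<notin> I0_rep k \<delta>"
  shows "\<exists>\<beta>. kless k \<beta> \<delta> \<and> (\<forall>f \<in> I0_rep k \<delta>. lessI0 k g f \<longrightarrow>
    (\<exists>h \<in> I0_rep k \<beta>. lessI0 k g h \<and> lessI0 k h f))"
proof -
  have "\<exists>n. \<not> kless k (fst (g n)) \<delta>"
    using g unfolding I0_rep_def by blast
  define n0 where "n0 = (LEAST n. \<not> kless k (fst (g n)) \<delta>)"
  have n0: "\<not> kless k (fst (g n0)) \<delta>"
    unfolding n0_def by (rule LeastI_ex) fact
  have "kless k (fst (g m)) \<delta>" if "m < n0" for m
    using not_less_Least[OF that[unfolded n0_def]] by blast
  then obtain \<beta> where \<beta>: "kless k \<beta> \<delta>"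
    and above: "\<forall>x \<in> insert (kzero k) ((\<lambda>m. fst (g m)) ` {..<n0}). kless k x \<beta>"
    using limit_bounds_finite[OF lim, of "insert (kzero k) ((\<lambda>m. fst (g m)) ` {..<n0})"]
      kzero_kless_limit[OF lim] by auto
  have "\<exists>h \<in> I0_rep k \<beta>. lessI0 k g h \<and> lessI0 k h f"
    if f: "f \<in> I0_rep k \<delta>" "lessI0 k g f" for f
  proof -
    obtain n where agree: "\<forall>m<n. g m = f m" and lex: "lexKQ k (g n) (f n)"
      using f(2) unfolding lessI0_def by blast
    have "kless k (fst (g m)) \<delta>" if "m \<le> n" for m
    proof (cases "m < n")
      case True
      then show ?thesis
        using agree f(1) unfolding I0_rep_def by auto
    next
      case False
      then show ?thesis
        using that lex f(1) kless_trans unfolding lexKQ_def I0_rep_def by auto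
    qed
    then have "n < n0"
      using n0 not_less by blast
    then show ?thesis
      using lessI0_interpolate_in_I0_rep[OF agree lex] above by auto
  qed
  then show ?thesis
    using \<beta> by blast
qed

lemma Irep_interpolation:
  assumes lim: "klimit k \<delta>" and nu: "\<nu> \<in> Iset k i" "\<nu> \<notin> Irep k i \<delta>"
  shows "\<exists>\<beta>. kless k \<beta> \<delta> \<and>
           (\<forall>\<sigma> \<in> Irep k i \<delta>. (\<nu>, \<sigma>) \<in> Iless k i \<longrightarrow>
              (\<exists>\<sigma>' \<in> Irep k (kzero k) \<beta>. (\<sigma>', \<sigma>) \<in> Iless k i \<and> (\<nu>, \<sigma>') \<in> Iless k i))"
proof -
  have base: "fst \<nu> \<in> I0 k" "fst \<nu> \<notin> I0_rep k \<delta>"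
    using nu Iset_fst_in_I0 Irep_eq_fst_I0_rep by auto
  obtain \<beta> where \<beta>: "kless k \<beta> \<delta>"
    and interpolate: "\<forall>f \<in> I0_rep k \<delta>. lessI0 k (fst \<nu>) f \<longrightarrow>
      (\<exists>h \<in> I0_rep k \<beta>. lessI0 k (fst \<nu>) h \<and> lessI0 k h f)"
    using I0_rep_interpolation[OF lim base] by blast
  have "\<exists>\<sigma>' \<in> Irep k (kzero k) \<beta>. (\<sigma>', \<sigma>) \<in> Iless k i \<and> (\<nu>, \<sigma>') \<in> Iless k i"
    if \<sigma>: "\<sigma> \<in> Irep k i \<delta>" "(\<nu>, \<sigma>) \<in> Iless k i" for \<sigma>
  proof -
    have \<sigma>_base: "\<sigma> \<in> Iset k i" "fst \<sigma> \<in> I0_rep k \<delta>"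
      using \<sigma>(1) Irep_eq_fst_I0_rep by auto
    moreover have "fst \<nu> \<noteq> fst \<sigma>"
      using \<sigma>_base(2) base(2) by auto
    ultimately have "lessI0 k (fst \<nu>) (fst \<sigma>)"
      using Iless_imp_lessI0_fst[OF \<sigma>(2)] by blast
    then obtain h where h: "h \<in> I0_rep k \<beta>" "lessI0 k (fst \<nu>) h" "lessI0 k h (fst \<sigma>)"
      using interpolate \<sigma>_base(2) by blast
    have "h \<in> I0 k"
      using h(1) unfolding I0_rep_def by blast
    have "(h, []) \<in> Irep k (kzero k) \<beta>"
      using \<open>h \<in> I0 k\<close> h(1) I0_in_Iset by (simp add: Irep_eq_fst_I0_rep)
    moreover have "((h, []), \<sigma>) \<in> Iless k i"
      using lessI0_fst_imp_Iless[OF \<sigma>_base(1) \<open>h \<in> I0 k\<close>] h(3) by blast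
    moreover have "(\<nu>, (h, [])) \<in> Iless k i"
      using lessI0_fst_imp_Iless[OF nu(1) \<open>h \<in> I0 k\<close>] h(2) by blast
    ultimately show ?thesis
      by blast
  qed
  then show ?thesis
    using \<beta> by blast
qed

end

theorem mainTheorem11:
  fixes k :: "'k rel" and i \<delta> :: 'k and \<nu> :: "'k elt"
  assumes card: "card_order k"
    and uncountable: "(natLeq, k) \<in> ordLess"
    and regular: "regularCard k"
    and kappa_less_kappa: "\<forall>\<alpha>. (card_of (Func (underS k \<alpha>) (UNIV :: 'k set)), k) \<in> ordLeq"
    and omega_pow: "\<forall>\<alpha>. (card_of (Func (UNIV :: nat set) (underS k \<alpha>)), k) \<in> ordLess"
    and lim: "klimit k \<delta>"
    and nu: "\<nu> \<in> Iset k i" "\<nu> \<notin> Irep k i \<delta>"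
  shows "\<exists>\<beta>. kless k \<beta> \<delta> \<and>
           (\<forall>\<sigma> \<in> Irep k i \<delta>. (\<nu>, \<sigma>) \<in> Iless k i \<longrightarrow>
              (\<exists>\<sigma>' \<in> Irep k (kzero k) \<beta>. (\<sigma>', \<sigma>) \<in> Iless k i \<and> (\<nu>, \<sigma>') \<in> Iless k i))"
proof -
  interpret ordinal_index k
    using card_order_on_well_order_on[OF card] by unfold_locales
  show ?thesis
    using Irep_interpolation[OF lim nu] .
qed

end
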